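(* Let $\mathcal G$ be a Hilbert space of arbitrary (finite or infinite) dimension, let $A,B$ be bounded everywhere defined linear operators in $\mathcal G$ such that the linear relation $\Lambda=\{(f,f')\in\mathcal G\oplus\mathcal G:\ Af=Bf'\}$ is closed, and let $R$ be a bounded operator in $\mathcal G$. Then $(\Lambda-R)^{-1}$ is (the graph of) a bounded everywhere defined operator in $\mathcal G$ if and only if $\ker(A-BR)=\{0\}$ and $\operatorname{Ran}B\subset\operatorname{Ran}(A-BR)$.
   Context: A linear relation in $\mathcal G$ is a linear subspace of $\mathcal G\oplus\mathcal G$. For a relation $\Lambda$ and an operator $R$, $\Lambda-R=\{(f,f'-Rf):\ (f,f')\in\Lambda\}$, and the inverse relation of a relation $\Theta$ is $\Theta^{-1}=\{(g,f):(f,g)\in\Theta\}$. *)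

theory Defs
  imports "HOL-Analysis.Analysis"
begin

definition rel_minus_op :: "('a \<times> 'a::real_vector) set \<Rightarrow> ('a \<Rightarrow> 'a) \<Rightarrow> ('a \<times> 'a) set" where
  "rel_minus_op \<Lambda> R = {(f, f' - R f) | f f'. (f, f') \<in> \<Lambda>}"

definition rel_inverse :: "('a \<times> 'a) set \<Rightarrow> ('a \<times> 'a) set" where
  "rel_inverse \<Theta> = {(g, f). (f, g) \<in> \<Theta>}"

definition op_graph :: "('a \<Rightarrow> 'a) \<Rightarrow> ('a \<times> 'a) set" where
  "op_graph T = {(g, T g) | g. True}"

end

theory Submission
  imports Defs
begin

(* The relation (Lambda - R)^-1 consists of the pairs (g, f) with (A - B R) f = B g. It is the graph
   of an everywhere defined operator exactly when A - B R is injective and every B g lies in its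
   range; that operator is then linear with a closed graph, hence bounded by the closed graph theorem.
   The latter follows from the Baire category theorem: some closed sublevel set of norm (T x) has
   interior, so every x is approximated up to norm x / 2 by a y with norm (T y) <= M * norm x, and
   iterating the approximation writes x as a series along which T is controlled. *)

lemma summable_norm_cancel_complete:
  fixes f :: "nat \<Rightarrow> 'a::{real_normed_vector,complete_space}"
  assumes "summable (\<lambda>n. norm (f n))"
  shows "summable f"
proof (rule summable_bounded_partials)
  let ?tail = "\<lambda>a. (\<Sum>n. norm (f n)) - (\<Sum>n\<le>a. norm (f n))"
  show "?tail \<longlonglongrightarrow> 0"
    using tendsto_diff[OF tendsto_const[of "\<Sum>n. norm (f n)"] summable_LIMSEQ'[OF assms]] by simp
  show "\<forall>\<^sub>F a0 in sequentially. \<forall>a\<ge>a0. \<forall>b>a. norm (sum f {a<..b}) \<le> ?tail a"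
  proof (intro always_eventually allI impI)
    fix a b :: nat
    assume "a < b"
    have "norm (sum f {a<..b}) \<le> (\<Sum>n\<in>{a<..b}. norm (f n))"
      by (rule norm_sum)
    also have "\<dots> = (\<Sum>n\<in>{..b} - {..a}. norm (f n))"
      by (rule sum.cong) auto
    also have "\<dots> = (\<Sum>n\<le>b. norm (f n)) - (\<Sum>n\<le>a. norm (f n))"
      using \<open>a < b\<close> by (intro sum_diff) auto
    also have "\<dots> \<le> ?tail a"
      using sum_le_suminf[OF assms, of "{..b}"] by simp
    finally show "norm (sum f {a<..b}) \<le> ?tail a" .
  qed
qed

lemma ex_sublevel_closure_interior_nonempty:
  fixes \<phi> :: "'a::complete_space \<Rightarrow> real"
  shows "\<exists>n::nat. interior (closure {x. \<phi> x \<le> n}) \<noteq> {}"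
proof (rule ccontr)
  let ?S = "\<lambda>n::nat. closure {x. \<phi> x \<le> n}"
  assume "\<nexists>n. interior (?S n) \<noteq> {}"
  then have "euclidean interior_of \<Union>(range ?S) = {}"
    by (intro Baire_category_alt)
      (auto simp: completely_metrizable_space_euclidean euclidean_interior_of)
  moreover have "x \<in> ?S (nat \<lceil>\<phi> x\<rceil>)" for x
    by (intro closure_subset[THEN subsetD]) (simp add: real_nat_ceiling_ge)
  then have "\<Union>(range ?S) = UNIV"
    by blast
  ultimately show False
    by (simp add: euclidean_interior_of)
qed

lemma linear_sublevel_closure_half_approximation:
  fixes T :: "'a::real_normed_vector \<Rightarrow> 'b::real_normed_vector"
  assumes lin: "linear T" and int: "interior (closure {x. norm (T x) \<le> c}) \<noteq> {}"
  obtains M where "M \<ge> 0" "\<And>x. \<exists>y. norm (T y) \<le> M * norm x \<and> norm (x - y) \<le> norm x / 2"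
proof -
  let ?S = "closure {x. norm (T x) \<le> c}"
  obtain x0 r where "r > 0" and ball: "ball x0 r \<subseteq> ?S"
    using int mem_interior by blast
  then have "{x. norm (T x) \<le> c} \<noteq> {}"
    using centre_in_ball by fastforce
  then have "c \<ge> 0"
    using norm_ge_zero order_trans by blast
  have near: "\<exists>w. norm (T w) \<le> 2 * c \<and> norm (z - w) < r / 4" if "norm z < r" for z
  proof -
    have "x0 + z \<in> ?S" "x0 \<in> ?S"
      using ball \<open>r > 0\<close> that by (auto simp: dist_norm)
    moreover have "r / 8 > 0"
      using \<open>r > 0\<close> by simp
    ultimately obtain a b where a: "norm (T a) \<le> c" "dist a (x0 + z) < r / 8"
      and b: "norm (T b) \<le> c" "dist b x0 < r / 8"
      unfolding closure_approachable by (metis mem_Collect_eq)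
    have Tab: "norm (T (a - b)) \<le> 2 * c"
      using a b norm_triangle_ineq4[of "T a" "T b"] by (simp add: linear_diff[OF lin])
    have "norm (z - (a - b)) = norm ((x0 + z - a) - (x0 - b))"
      by (rule arg_cong[where f = norm]) (simp add: algebra_simps)
    also have "\<dots> \<le> norm (x0 + z - a) + norm (x0 - b)"
      by (rule norm_triangle_ineq4)
    also have "\<dots> < r / 4"
      using a b by (simp add: dist_norm norm_minus_commute)
    finally show ?thesis
      using Tab by blast
  qed
  have "\<exists>y. norm (T y) \<le> 4 * c / r * norm x \<and> norm (x - y) \<le> norm x / 2" for x
  proof (cases "x = 0")
    case True
    then show ?thesis
      by (intro exI[of _ 0]) (simp add: linear_0[OF lin])
  next
    case False
    define k where "k = r / (2 * norm x)"
    have "k > 0"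
      using False \<open>r > 0\<close> by (simp add: k_def)
    have "norm (k *\<^sub>R x) < r"
      using False \<open>r > 0\<close> by (simp add: k_def)
    then obtain w where w: "norm (T w) \<le> 2 * c" "norm (k *\<^sub>R x - w) < r / 4"
      using near by blast
    have "norm (T (w /\<^sub>R k)) = norm (T w) / k"
      using \<open>k > 0\<close> by (simp add: linear_scale[OF lin] divide_inverse_commute)
    also have "\<dots> \<le> 2 * c / k"
      using w \<open>k > 0\<close> by (simp add: divide_right_mono)
    also have "\<dots> = 4 * c / r * norm x"
      using False \<open>r > 0\<close> by (simp add: k_def field_simps)
    finally have "norm (T (w /\<^sub>R k)) \<le> 4 * c / r * norm x" .
    have "x - w /\<^sub>R k = (k *\<^sub>R x - w) /\<^sub>R k"
      using \<open>k > 0\<close> by (simp add: algebra_simps)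
    then have "norm (x - w /\<^sub>R k) = norm (k *\<^sub>R x - w) / k"
      using \<open>k > 0\<close> by (simp add: divide_inverse_commute)
    also have "\<dots> < r / 4 / k"
      using w(2) \<open>k > 0\<close> by (intro divide_strict_right_mono)
    also have "\<dots> = norm x / 2"
      using False \<open>r > 0\<close> by (simp add: k_def)
    finally show ?thesis
      using \<open>norm (T (w /\<^sub>R k)) \<le> 4 * c / r * norm x\<close> by (intro exI[of _ "w /\<^sub>R k"]) simp
  qed
  moreover have "4 * c / r \<ge> 0"
    using \<open>c \<ge> 0\<close> \<open>r > 0\<close> by simp
  ultimately show ?thesis
    using that by blast
qed

lemma bounded_linear_half_approximation_closed_graph:
  fixes T :: "'a::real_normed_vector \<Rightarrow> 'b::{real_normed_vector,complete_space}"
  assumes lin: "linear T" and graph: "closed (range (\<lambda>x. (x, T x)))" and "M \<ge> 0"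
    and approx: "\<And>x. \<exists>y. norm (T y) \<le> M * norm x \<and> norm (x - y) \<le> norm x / 2"
  shows "bounded_linear T"
proof -
  obtain Y where Y: "\<And>x. norm (T (Y x)) \<le> M * norm x" "\<And>x. norm (x - Y x) \<le> norm x / 2"
    using approx by metis
  have "norm (T x) \<le> norm x * (2 * M)" for x
  proof -
    define xs where "xs k = ((\<lambda>v. v - Y v) ^^ k) x" for k
    define y where "y k = Y (xs k)" for k
    have xs_bound: "norm (xs k) \<le> norm x * (1/2) ^ k" for k
    proof (induction k)
      case (Suc k)
      have "norm (xs (Suc k)) \<le> norm (xs k) / 2"
        using Y(2) by (simp add: xs_def)
      with Suc show ?case
        by simp
    qed (simp add: xs_def)
    have Ty_bound: "norm (T (y k)) \<le> M * norm x * (1/2) ^ k" for k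
      using Y(1)[of "xs k"] mult_left_mono[OF xs_bound[of k] \<open>M \<ge> 0\<close>]
      by (simp add: y_def mult.assoc)
    have telescope: "(\<Sum>k<N. y k) = x - xs N" for N
      by (induction N) (simp_all add: xs_def y_def)
    have "xs \<longlonglongrightarrow> 0"
      by (rule Lim_null_comparison[OF always_eventually[OF allI[OF xs_bound]]])
        (intro tendsto_mult_right_zero LIMSEQ_realpow_zero; simp)
    have sum_y: "(\<lambda>N. \<Sum>k<N. y k) \<longlonglongrightarrow> x"
      using tendsto_diff[OF tendsto_const[of x] \<open>xs \<longlonglongrightarrow> 0\<close>] by (simp add: telescope)
    have geom: "(\<lambda>k. M * norm x * (1/2) ^ k) sums (M * norm x * 2)"
      using sums_mult[OF geometric_sums[of "1/2::real"]] by simp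
    have "summable (\<lambda>k. T (y k))"
      by (rule summable_norm_cancel_complete, rule summable_comparison_test[OF _ sums_summable[OF geom]])
        (use Ty_bound in simp)
    then have sum_Ty: "(\<lambda>N. T (\<Sum>k<N. y k)) \<longlonglongrightarrow> (\<Sum>k. T (y k))"
      by (simp add: summable_LIMSEQ linear_sum[OF lin])
    have "(x, \<Sum>k. T (y k)) \<in> range (\<lambda>x. (x, T x))"
      by (rule closed_sequentially[OF graph _ tendsto_Pair[OF sum_y sum_Ty]]) simp
    then have "T x = (\<Sum>k. T (y k))"
      by auto
    moreover have "norm (\<Sum>k. T (y k)) \<le> M * norm x * 2"
    proof (rule LIMSEQ_le_const2[OF tendsto_norm[OF summable_LIMSEQ[OF \<open>summable (\<lambda>k. T (y k))\<close>]]])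
      show "\<exists>N. \<forall>n\<ge>N. norm (\<Sum>k<n. T (y k)) \<le> M * norm x * 2"
      proof (intro exI allI impI)
        fix n :: nat
        have "norm (\<Sum>k<n. T (y k)) \<le> (\<Sum>k<n. norm (T (y k)))"
          by (rule norm_sum)
        also have "\<dots> \<le> (\<Sum>k<n. M * norm x * (1/2) ^ k)"
          by (intro sum_mono Ty_bound)
        also have "\<dots> \<le> M * norm x * 2"
          using sum_le_suminf[OF sums_summable[OF geom], of "{..<n}"] sums_unique[OF geom]
            \<open>M \<ge> 0\<close> by simp
        finally show "norm (\<Sum>k<n. T (y k)) \<le> M * norm x * 2" .
      qed
    qed
    ultimately show ?thesis
      by (simp add: algebra_simps)
  qed
  then show ?thesis
    using lin by (auto simp: bounded_linear_def bounded_linear_axioms_def)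
qed

theorem closed_graph_imp_bounded_linear:
  fixes T :: "'a::{real_normed_vector,complete_space} \<Rightarrow> 'b::{real_normed_vector,complete_space}"
  assumes "linear T" and "closed (range (\<lambda>x. (x, T x)))"
  shows "bounded_linear T"
proof -
  obtain n :: nat where "interior (closure {x. norm (T x) \<le> n}) \<noteq> {}"
    using ex_sublevel_closure_interior_nonempty[of "\<lambda>x. norm (T x)"] by blast
  then obtain M where "M \<ge> 0" "\<And>x. \<exists>y. norm (T y) \<le> M * norm x \<and> norm (x - y) \<le> norm x / 2"
    using linear_sublevel_closure_half_approximation[OF \<open>linear T\<close>] by blast
  then show ?thesis
    using bounded_linear_half_approximation_closed_graph[OF assms] by blast
qed

lemma rel_inverse_rel_minus_op_eq:
  assumes "linear B"
  shows "rel_inverse (rel_minus_op {(f, f'). A f = B f'} R) = {(g, f). A f - B (R f) = B g}"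
proof -
  have "(f, g) \<in> rel_minus_op {(f, f'). A f = B f'} R \<longleftrightarrow> A f - B (R f) = B g" for f g
  proof
    assume "(f, g) \<in> rel_minus_op {(f, f'). A f = B f'} R"
    then obtain f' where "g = f' - R f" "A f = B f'"
      unfolding rel_minus_op_def by auto
    then show "A f - B (R f) = B g"
      by (simp add: linear_diff[OF assms])
  next
    assume "A f - B (R f) = B g"
    then have "A f = B (g + R f)"
      by (simp add: linear_add[OF assms] algebra_simps)
    then show "(f, g) \<in> rel_minus_op {(f, f'). A f = B f'} R"
      unfolding rel_minus_op_def by force
  qed
  then show ?thesis
    unfolding rel_inverse_def by auto
qed

lemma op_graph_eq_solution_relation_iff:
  fixes B C :: "'a::{real_normed_vector,complete_space} \<Rightarrow> 'a"
  assumes B: "bounded_linear B" and C: "bounded_linear C"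
  shows "(\<exists>T. bounded_linear T \<and> {(g, f). C f = B g} = op_graph T) \<longleftrightarrow>
    inj C \<and> range B \<subseteq> range C"
proof
  assume "\<exists>T. bounded_linear T \<and> {(g, f). C f = B g} = op_graph T"
  then obtain T where "bounded_linear T" and graph: "{(g, f). C f = B g} = op_graph T"
    by blast
  have solves: "C f = B g \<longleftrightarrow> f = T g" for f g
    using graph unfolding op_graph_def by blast
  have "C x = 0 \<Longrightarrow> x = 0" for x
    using solves[of x 0] linear_0[OF bounded_linear.linear[OF B]]
      linear_0[OF bounded_linear.linear[OF \<open>bounded_linear T\<close>]] by simp
  then have "inj C"
    by (simp add: linear_inj_iff_eq_0[OF bounded_linear.linear[OF C]])
  moreover have "range B \<subseteq> range C"
  proof (rule image_subsetI)
    show "B g \<in> range C" for g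
      using solves[of "T g" g] by (metis rangeI)
  qed
  ultimately show "inj C \<and> range B \<subseteq> range C" ..
next
  assume "inj C \<and> range B \<subseteq> range C"
  then have "inj C" and ran: "range B \<subseteq> range C"
    by blast+
  interpret B: bounded_linear B by fact
  interpret C: bounded_linear C by fact
  define T where "T = inv C \<circ> B"
  have CT: "C (T g) = B g" for g
    using ran f_inv_into_f[of "B g" C UNIV] by (auto simp: T_def)
  have solves: "C f = B g \<longleftrightarrow> f = T g" for f g
    using CT injD[OF \<open>inj C\<close>] by metis
  have "linear T"
  proof
    show "T (x + y) = T x + T y" for x y
      by (rule injD[OF \<open>inj C\<close>]) (simp add: B.add C.add CT)
    show "T (r *\<^sub>R x) = r *\<^sub>R T x" for r x
      by (rule injD[OF \<open>inj C\<close>]) (simp add: B.scale C.scale CT)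
  qed
  have graph: "range (\<lambda>g. (g, T g)) = {(g, f). C f = B g}"
    using solves by auto
  have "closed {p. C (snd p) = B (fst p)}"
    by (intro closed_Collect_eq continuous_on_compose2[OF C.continuous_on[OF continuous_on_id]]
        continuous_on_compose2[OF B.continuous_on[OF continuous_on_id]] continuous_intros) auto
  then have "closed (range (\<lambda>g. (g, T g)))"
    unfolding graph by (simp add: case_prod_beta')
  then have "bounded_linear T"
    by (rule closed_graph_imp_bounded_linear[OF \<open>linear T\<close>])
  moreover have "{(g, f). C f = B g} = op_graph T"
    unfolding op_graph_def graph[symmetric] by auto
  ultimately show "\<exists>T. bounded_linear T \<and> {(g, f). C f = B g} = op_graph T"
    by blast
qed

theorem lemmaA1:
  fixes A B R :: "'a::{real_inner, complete_space} \<Rightarrow> 'a"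
  assumes "bounded_linear A" and "bounded_linear B" and "bounded_linear R"
    and "closed {(f, f'). A f = B f'}"
  shows "(\<exists>T. bounded_linear T \<and>
            rel_inverse (rel_minus_op {(f, f'). A f = B f'} R) = op_graph T)
         \<longleftrightarrow> ({x. A x - B (R x) = 0} = {0} \<and> range B \<subseteq> range (\<lambda>x. A x - B (R x)))"
proof -
  let ?C = "\<lambda>x. A x - B (R x)"
  have C: "bounded_linear ?C"
    by (rule bounded_linear_sub[OF assms(1) bounded_linear_compose[OF assms(2,3)]])
  have "{x. ?C x = 0} = {0} \<longleftrightarrow> inj ?C"
    using linear_inj_iff_eq_0[OF bounded_linear.linear[OF C]] linear_0[OF bounded_linear.linear[OF C]]
    by auto
  then show ?thesis
    using op_graph_eq_solution_relation_iff[OF assms(2) C]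
      rel_inverse_rel_minus_op_eq[OF bounded_linear.linear[OF assms(2)], of A R]
    by simp
qed

end
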